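(* Let $P_p, P_e \in \mathbb{R}^{n\times n}$ be row-stochastic matrices, viewed as the transition matrices of two independent discrete-time Markov chains (a pursuer and an evader) on the node set $\{1,\dots,n\}$. The following statements are equivalent: (i) for every pair of nodes $i,j$, the meeting time $m_{i,j}$ is finite; (ii) for every pair of nodes $i,j$, there exist a node $k$ and a length $\ell\ge 1$ such that there is a walk of length $\ell$ from $i$ to $k$ for $P_p$ and a walk of length $\ell$ from $j$ to $k$ for $P_e$; (iii) for every pair of nodes $i,j$, there exists a walk of length at least $1$ for the stochastic matrix $P_e\otimes P_p$ from the Kronecker-graph node $(i,j)$ to a node $(k,k)$ for some $k\in\{1,\dots,n\}$; (iv) the row-substochastic matrix $(P_e\otimes P_p)E$ has spectral radius strictly less than $1$, where $E = I_{n^2} - \mathrm{diag}(\mathrm{vec}(I_n))$. Moreover, when these hold, the matrix $M=[m_{i,j}]$ of meeting times satisfies $$\mathrm{vec}(M) = \big(I_{n^2} - (P_e\otimes P_p)E\big)^{-1}\mathbf{1}_{n^2}.$$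
   Context: Let $X^{(p)}_t, X^{(e)}_t\in\{1,\dots,n\}$, $t=0,1,2,\dots$, be the positions of the pursuer and evader, evolving as independent Markov chains with transition matrices $P_p=[p^{(p)}_{i,j}]$ and $P_e=[p^{(e)}_{i,j}]$ (typically supported on the edges of a strongly connected digraph on $\{1,\dots,n\}$). The first meeting time from $i,j$ is $T_{i,j}=\min\{t\ge 1 : X^{(p)}_t = X^{(e)}_t\}$ given $X^{(p)}_0=i$, $X^{(e)}_0=j$ (with $T_{i,j}=\infty$ if they never meet; if $i=j$ this is the first time $t\ge1$ they meet again), and the meeting time is $m_{i,j}=\mathbb{E}[T_{i,j}]$. A walk of length $\ell$ from $i_1$ to $i_{\ell+1}$ for a matrix $P=[p_{a,b}]$ is a sequence of nodes $i_1,\dots,i_{\ell+1}$ with $p_{i_k,i_{k+1}}>0$ for $1\le k\le \ell$. $\otimes$ is the Kronecker product; the Kronecker graph has node set $\{1,\dots,n\}^2$, with node $(i,j)$ (pursuer at $i$, evader at $j$) corresponding to index $(j-1)n+i$ of $P_e\otimes P_p$. $\mathrm{vec}$ stacks the columns of a matrix into a vector (so $m_{i,j}$ is the $((j-1)n+i)$-th entry of $\mathrm{vec}(M)$), $\mathrm{diag}(v)$ is the diagonal matrix with diagonal $v$, and $\mathbf{1}_{N}$ is the all-ones vector in $\mathbb{R}^N$. *)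

theory Defs
  imports "Jordan_Normal_Form.Spectral_Radius" "Jordan_Normal_Form.Gauss_Jordan_Elimination"
    "HOL-Library.Extended_Nonnegative_Real"
begin

text \<open>Nodes are 0-based: node a of the paper's set {1..n} is index a-1 here, i.e. nodes are
  {0..<n}.  Kronecker-graph node (i,j) (pursuer at i, evader at j) is index j*n+i
  (0-based version of (j-1)n+i).\<close>

definition row_stochastic :: "nat \<Rightarrow> real mat \<Rightarrow> bool" where
  "row_stochastic n P \<longleftrightarrow> P \<in> carrier_mat n n \<and>
     (\<forall>i<n. \<forall>j<n. P $$ (i,j) \<ge> 0) \<and> (\<forall>i<n. (\<Sum>j<n. P $$ (i,j)) = 1)"

text \<open>A walk for matrix P on nodes {0..<N}: a nonempty node sequence with positive consecutive
  transition entries; its length is (length xs - 1).\<close>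
definition is_walk :: "nat \<Rightarrow> real mat \<Rightarrow> nat list \<Rightarrow> bool" where
  "is_walk N P xs \<longleftrightarrow> xs \<noteq> [] \<and> set xs \<subseteq> {..<N} \<and>
     (\<forall>k. Suc k < length xs \<longrightarrow> P $$ (xs ! k, xs ! Suc k) > 0)"

definition kron :: "real mat \<Rightarrow> real mat \<Rightarrow> real mat" where
  "kron A B = Matrix.mat (dim_row A * dim_row B) (dim_col A * dim_col B)
     (\<lambda>(r,c). A $$ (r div dim_row B, c div dim_col B) * B $$ (r mod dim_row B, c mod dim_col B))"

definition vec_of_mat :: "nat \<Rightarrow> real mat \<Rightarrow> real vec" where
  "vec_of_mat n M = Matrix.vec (n*n) (\<lambda>a. M $$ (a mod n, a div n))"

definition diag_of_vec :: "real vec \<Rightarrow> real mat" where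
  "diag_of_vec v = mat_diag (dim_vec v) (\<lambda>a. v $ a)"

definition E_mat :: "nat \<Rightarrow> real mat" where
  "E_mat n = 1\<^sub>m (n*n) - diag_of_vec (vec_of_mat n (1\<^sub>m n))"

definition path_prob :: "real mat \<Rightarrow> nat list \<Rightarrow> real" where
  "path_prob P xs = (\<Prod>k<length xs - 1. P $$ (xs ! k, xs ! Suc k))"

definition trajs :: "nat \<Rightarrow> nat \<Rightarrow> nat \<Rightarrow> nat list set" where
  "trajs n t i = {xs. length xs = Suc t \<and> set xs \<subseteq> {..<n} \<and> xs ! 0 = i}"

text \<open>P(T_{i,j} = t): joint law of two independent chains; first meeting at time t \<ge> 1.\<close>
definition meet_prob :: "nat \<Rightarrow> real mat \<Rightarrow> real mat \<Rightarrow> nat \<Rightarrow> nat \<Rightarrow> nat \<Rightarrow> real" where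
  "meet_prob n Pp Pe i j t = (if t = 0 then 0 else
     (\<Sum>xs\<in>trajs n t i. \<Sum>ys\<in>trajs n t j.
        if (\<forall>s. 1 \<le> s \<and> s < t \<longrightarrow> xs ! s \<noteq> ys ! s) \<and> xs ! t = ys ! t
        then path_prob Pp xs * path_prob Pe ys else 0))"

text \<open>m_{i,j} = E[T_{i,j}] in [0,\<infinity>], with T = \<infinity> on the event of never meeting.\<close>
definition meeting_time :: "nat \<Rightarrow> real mat \<Rightarrow> real mat \<Rightarrow> nat \<Rightarrow> nat \<Rightarrow> ennreal" where
  "meeting_time n Pp Pe i j =
     (\<Sum>t. of_nat t * ennreal (meet_prob n Pp Pe i j t)) +
     (if (\<Sum>t. ennreal (meet_prob n Pp Pe i j t)) < 1 then \<infinity> else 0)"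

end

theory Submission
  imports Defs
begin

text \<open>The pair (pursuer, evader) is itself a Markov chain, with transition matrix
  \<open>K = P\<^sub>e \<otimes> P\<^sub>p\<close>, and \<open>A = K E\<close> is \<open>K\<close> with the columns of the diagonal states \<open>(k,k)\<close>
  deleted. The entry of \<open>A\<^sup>t 1\<close> at \<open>(i,j)\<close> is the probability \<open>q(t)\<close> that the two chains
  have not met at any of the times \<open>1..t\<close>. Hence \<open>P(T = t+1) = q(t) - q(t+1)\<close>, and
  \<open>E[T] = \<Sum>\<^sub>t q(t)\<close> is the Neumann series for \<open>(I - A)\<^sup>-\<^sup>1 1\<close> as soon as \<open>A\<close> has spectral
  radius below 1. That in turn holds when every pair can reach the diagonal: for an eigenvalue
  of modulus at least 1, the modulus of an eigenvector is subinvariant for \<open>A\<close>, and at a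
  coordinate where it is maximal the row sums of \<open>K\<close> force every \<open>K\<close>-successor to be maximal
  and off the diagonal, which propagates along a walk into the diagonal. Conversely, a finite
  meeting time means that some first-meeting trajectory has positive probability, which yields
  the walks.\<close>

lemma sum_lessThan_mult_nat: "(\<Sum>b<m*n. f b) = (\<Sum>l<m. \<Sum>k<n. f (l*n+k::nat))"
proof (induction m)
  case 0 then show ?case by simp
next
  case (Suc m)
  have "{..<Suc m * n} = {..<m*n} \<union> {m*n..<m*n+n}" by auto
  then have "(\<Sum>b<Suc m*n. f b) = (\<Sum>b<m*n. f b) + (\<Sum>b\<in>{m*n..<m*n+n}. f b)"
    by (metis sum.union_disjoint finite_lessThan finite_atLeastLessThan ivl_disj_int_one(2)
        lessThan_atLeast0)
  also have "(\<Sum>b\<in>{m*n..<m*n+n}. f b) = (\<Sum>k<n. f (m*n+k))"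
    using sum.shift_bounds_nat_ivl[of f 0 "m*n" n] by (simp add: lessThan_atLeast0 add.commute)
  finally show ?case using Suc by simp
qed

lemma sum_square_split_diagonal:
  "(\<Sum>k<n. \<Sum>l<n. f k l) = (\<Sum>k<n. \<Sum>l<n. if k = l then 0 else f k l) + (\<Sum>k<(n::nat). f k k)"
proof -
  have "(\<Sum>k<n. \<Sum>l<n. f k l) =
      (\<Sum>k<n. \<Sum>l<n. if k = l then 0 else f k l) + (\<Sum>k<n. \<Sum>l<n. if k = l then f k l else 0)"
    by (simp only: sum.distrib[symmetric]) (intro sum.cong refl, simp)
  then show ?thesis by (simp add: sum.delta)
qed

lemma pair_index_less: "i < n \<Longrightarrow> j < m \<Longrightarrow> j*n+i < m*(n::nat)"
proof -
  assume "i < n" "j < m"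
  then have "j*n+i < Suc j * n" by simp
  also have "\<dots> \<le> m*n" using \<open>j < m\<close> by (intro mult_le_mono1) simp
  finally show ?thesis .
qed

lemma pair_index_div_less: "a < m*n \<Longrightarrow> a div n < (m::nat)"
  by (simp add: less_mult_imp_div_less)

lemma pair_index_mod_less: "a < m*n \<Longrightarrow> a mod n < (n::nat)"
  by (metis mod_less_divisor mult_0_right not_gr0 not_less0)

lemma kron_carrier_mat:
  "P \<in> carrier_mat n n \<Longrightarrow> Q \<in> carrier_mat m m \<Longrightarrow> kron P Q \<in> carrier_mat (n*m) (n*m)"
  by (simp add: kron_def)

lemma index_kron:
  "P \<in> carrier_mat n n \<Longrightarrow> Q \<in> carrier_mat m m \<Longrightarrow> a < n*m \<Longrightarrow> b < n*m \<Longrightarrow>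
   kron P Q $$ (a,b) = P $$ (a div m, b div m) * Q $$ (a mod m, b mod m)"
  by (simp add: kron_def)

lemma row_stochastic_kron:
  assumes P: "row_stochastic n P" and Q: "row_stochastic m Q"
  shows "row_stochastic (n*m) (kron P Q)"
  unfolding row_stochastic_def
proof (intro conjI allI impI)
  have PQ: "P \<in> carrier_mat n n" "Q \<in> carrier_mat m m"
    using P Q by (auto simp: row_stochastic_def)
  then show "kron P Q \<in> carrier_mat (n*m) (n*m)" by (rule kron_carrier_mat)
  fix a assume a: "a < n*m"
  then have a_nodes: "a div m < n" "a mod m < m"
    by (auto intro: pair_index_div_less pair_index_mod_less)
  {
    fix b assume b: "b < n*m"
    then have "b div m < n" "b mod m < m"
      by (auto intro: pair_index_div_less pair_index_mod_less)
    then show "0 \<le> kron P Q $$ (a,b)"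
      using P Q a b a_nodes by (simp add: index_kron[OF PQ] row_stochastic_def)
  }
  have "(\<Sum>b<n*m. kron P Q $$ (a,b)) = (\<Sum>l<n. \<Sum>k<m. P $$ (a div m, l) * Q $$ (a mod m, k))"
    unfolding sum_lessThan_mult_nat using a
    by (intro sum.cong refl) (simp add: index_kron[OF PQ] pair_index_less)
  also have "\<dots> = (\<Sum>l<n. P $$ (a div m, l)) * (\<Sum>k<m. Q $$ (a mod m, k))"
    by (simp add: sum_product)
  also have "\<dots> = 1" using P Q a_nodes by (simp add: row_stochastic_def)
  finally show "(\<Sum>b<n*m. kron P Q $$ (a,b)) = 1" .
qed

lemma kron_walk_of_walks:
  assumes P: "P \<in> carrier_mat n n" and Q: "Q \<in> carrier_mat m m"
    and ys: "is_walk n P ys" and xs: "is_walk m Q xs" and len: "length ys = length xs"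
  shows "\<exists>zs. is_walk (n*m) (kron P Q) zs \<and> length zs = length xs \<and>
    hd zs = hd ys * m + hd xs \<and> last zs = last ys * m + last xs"
proof -
  define zs where "zs = map (\<lambda>s. ys!s * m + xs!s) [0..<length xs]"
  have node: "ys!s < n" "xs!s < m" if "s < length xs" for s
    using that ys xs len by (auto simp: is_walk_def subset_eq)
  have ne: "xs \<noteq> []" "ys \<noteq> []" using xs ys by (auto simp: is_walk_def)
  have "is_walk (n*m) (kron P Q) zs" unfolding is_walk_def
  proof (intro conjI allI impI)
    show "zs \<noteq> []" using ne by (simp add: zs_def)
    show "set zs \<subseteq> {..<n*m}" using node by (auto simp: zs_def pair_index_less)
    fix s assume "Suc s < length zs"
    then have s: "s < length xs" "Suc s < length xs" by (auto simp: zs_def)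
    have "kron P Q $$ (zs!s, zs!Suc s) = P $$ (ys!s, ys!Suc s) * Q $$ (xs!s, xs!Suc s)"
      using s node[OF s(1)] node[OF s(2)]
      by (simp add: zs_def index_kron[OF P Q] pair_index_less)
    moreover have "P $$ (ys!s, ys!Suc s) > 0" "Q $$ (xs!s, xs!Suc s) > 0"
      using s ys xs len by (auto simp: is_walk_def)
    ultimately show "kron P Q $$ (zs!s, zs!Suc s) > 0" by simp
  qed
  moreover have "hd zs = hd ys * m + hd xs" "last zs = last ys * m + last xs"
    using ne len by (simp_all add: zs_def hd_conv_nth last_conv_nth)
  ultimately show ?thesis by (auto simp: zs_def)
qed

lemma E_mat_carrier: "E_mat n \<in> carrier_mat (n*n) (n*n)"
  unfolding E_mat_def diag_of_vec_def vec_of_mat_def by (intro minus_carrier_mat) auto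

lemma index_mult_E_mat:
  assumes K: "K \<in> carrier_mat (n*n) (n*n)" and a: "a < n*n" and b: "b < n*n"
  shows "(K * E_mat n) $$ (a,b) = (if b mod n = b div n then 0 else K $$ (a,b))"
proof -
  have E: "E_mat n $$ (c,b) = (if c = b \<and> b mod n \<noteq> b div n then 1 else 0)" if "c < n*n" for c
    using that b pair_index_div_less[OF b] pair_index_mod_less[OF b]
    by (auto simp: E_mat_def diag_of_vec_def vec_of_mat_def mat_diag_def)
  have "(K * E_mat n) $$ (a,b) = (\<Sum>c = 0..<n*n. K $$ (a,c) * E_mat n $$ (c,b))"
    using a b K E_mat_carrier[of n] by (simp add: index_mult_mat scalar_prod_def)
  also have "\<dots> = (\<Sum>c = 0..<n*n. if c = b then K $$ (a,c) * E_mat n $$ (c,b) else 0)"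
    by (rule sum.cong) (auto simp: E)
  also have "\<dots> = K $$ (a,b) * E_mat n $$ (b,b)" using b by simp
  finally show ?thesis using b by (simp add: E)
qed

subsection \<open>Spectral radius below one\<close>

lemma mult_mat_vec_index_sum:
  "M \<in> carrier_mat N N \<Longrightarrow> v \<in> carrier_vec N \<Longrightarrow> a < N \<Longrightarrow>
   (M *\<^sub>v v) $ a = (\<Sum>b<N. M $$ (a,b) * v $ b)"
  by (simp add: scalar_prod_def atLeast0LessThan)

lemma pow_mat_commute: "A \<in> carrier_mat N N \<Longrightarrow> A * A ^\<^sub>m t = A ^\<^sub>m t * A"
proof (induction t)
  case 0 then show ?case by simp
next
  case (Suc t)
  have "A * A ^\<^sub>m Suc t = (A * A ^\<^sub>m t) * A"
    using Suc.prems by (simp add: assoc_mult_mat[of A N N "A ^\<^sub>m t" N A N])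
  then show ?case using Suc by simp
qed

lemma pow_mat_Suc_mult_mat_vec:
  assumes A: "A \<in> carrier_mat N N" and v: "v \<in> carrier_vec N"
  shows "A ^\<^sub>m Suc t *\<^sub>v v = A *\<^sub>v (A ^\<^sub>m t *\<^sub>v v)"
proof -
  have "A ^\<^sub>m Suc t = A * A ^\<^sub>m t" using pow_mat_commute[OF A] by simp
  then show ?thesis using A v by (simp add: assoc_mult_mat_vec[of A N N "A ^\<^sub>m t" N v])
qed

lemma smult_pow_mat:
  "M \<in> carrier_mat N N \<Longrightarrow> (k \<cdot>\<^sub>m M) ^\<^sub>m t = (k::'a::comm_ring_1) ^ t \<cdot>\<^sub>m M ^\<^sub>m t"
proof (induction t)
  case 0 then show ?case by (intro eq_matI) auto
next
  case (Suc t)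
  have "(k \<cdot>\<^sub>m M) ^\<^sub>m Suc t = (k ^ t \<cdot>\<^sub>m M ^\<^sub>m t) * (k \<cdot>\<^sub>m M)" using Suc by simp
  also have "\<dots> = k ^ t \<cdot>\<^sub>m (M ^\<^sub>m t * (k \<cdot>\<^sub>m M))"
    using Suc.prems by (intro mult_smult_assoc_mat) auto
  also have "\<dots> = k ^ t \<cdot>\<^sub>m (k \<cdot>\<^sub>m (M ^\<^sub>m t * M))"
    using Suc.prems by (subst mult_smult_distrib) auto
  also have "\<dots> = k ^ Suc t \<cdot>\<^sub>m M ^\<^sub>m Suc t" by (intro eq_matI) (auto simp: ac_simps)
  finally show ?case .
qed

lemma eigenvalue_smult_mat:
  fixes A :: "'a::field mat"
  assumes A: "A \<in> carrier_mat N N" and k: "k \<noteq> 0" and ev: "eigenvalue (k \<cdot>\<^sub>m A) \<mu>"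
  shows "eigenvalue A (\<mu> / k)"
proof -
  from ev obtain v where v: "v \<in> carrier_vec N" "v \<noteq> 0\<^sub>v N" and kAv: "(k \<cdot>\<^sub>m A) *\<^sub>v v = \<mu> \<cdot>\<^sub>v v"
    using A by (auto simp: eigenvalue_def eigenvector_def)
  have "A *\<^sub>v v = (\<mu> / k) \<cdot>\<^sub>v v"
  proof (rule eq_vecI)
    fix a assume "a < dim_vec ((\<mu> / k) \<cdot>\<^sub>v v)"
    then have a: "a < N" using v by simp
    have "((k \<cdot>\<^sub>m A) *\<^sub>v v) $ a = k * (A *\<^sub>v v) $ a"
      using a A v by (simp add: scalar_prod_def sum_distrib_left mult.assoc)
    then have "k * (A *\<^sub>v v) $ a = \<mu> * v $ a" using kAv a v by simp
    then show "(A *\<^sub>v v) $ a = ((\<mu> / k) \<cdot>\<^sub>v v) $ a" using a v k by (simp add: field_simps)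
  qed (use A v in simp)
  then show ?thesis using A v by (auto simp: eigenvalue_def eigenvector_def)
qed

lemma spectral_radius_smult_le:
  assumes A: "A \<in> carrier_mat N N" and N: "0 < N" and k: "k \<noteq> 0"
  shows "spectral_radius (k \<cdot>\<^sub>m A) \<le> norm k * spectral_radius A"
proof -
  have "spectral_radius (k \<cdot>\<^sub>m A) \<in> norm ` spectrum (k \<cdot>\<^sub>m A)"
    using A N by (intro spectral_radius_mem_max(1)) auto
  then obtain \<mu> where \<mu>: "eigenvalue (k \<cdot>\<^sub>m A) \<mu>" "spectral_radius (k \<cdot>\<^sub>m A) = norm \<mu>"
    by (auto simp: spectrum_def)
  have "norm (\<mu> / k) \<le> spectral_radius A"
    using eigenvalue_smult_mat[OF A k \<mu>(1)]
    by (intro spectral_radius_mem_max(2)[OF A N]) (auto simp: spectrum_def)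
  then show ?thesis using \<mu>(2) k by (simp add: norm_divide pos_divide_le_eq mult.commute)
qed

text \<open>Scaling by \<open>1/c\<close> with \<open>\<rho>(A) < c < 1\<close> turns the bounded powers of a matrix of spectral
  radius below one into geometric decay.\<close>

lemma spectral_radius_less_1_geometric_bound:
  fixes A :: "complex mat"
  assumes A: "A \<in> carrier_mat N N" and sr: "spectral_radius A < 1"
  obtains c C where "0 < c" "c < 1"
    "\<And>t a b. a < N \<Longrightarrow> b < N \<Longrightarrow> norm ((A ^\<^sub>m t) $$ (a,b)) \<le> C * c ^ t"
proof (cases "N = 0")
  case True
  then show ?thesis by (intro that[of "1/2"]) auto
next
  case False
  define r where "r = spectral_radius A"
  have "r \<in> norm ` spectrum A" unfolding r_def using A False by (intro spectral_radius_mem_max(1)) auto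
  then have "0 \<le> r" by auto
  define c where "c = (r + 1) / 2"
  have c: "0 < c" "c < 1" "r < c" using \<open>0 \<le> r\<close> sr by (auto simp: c_def r_def)
  define B where "B = complex_of_real (1/c) \<cdot>\<^sub>m A"
  have B: "B \<in> carrier_mat N N" using A by (simp add: B_def)
  have "norm (complex_of_real (1/c)) = 1 / c" using c by (simp add: norm_divide)
  then have "spectral_radius B \<le> r / c"
    using spectral_radius_smult_le[OF A, of "complex_of_real (1/c)"] False c
    by (simp add: B_def r_def)
  also have "\<dots> < 1" using c by simp
  finally obtain C where C: "\<And>t. norm_bound (B ^\<^sub>m t) C"
    using spectral_radius_jnf_norm_bound_less_1_upper_triangular[OF B] by blast
  show ?thesis
  proof (rule that[OF c(1,2)])
    fix t a b assume ab: "a < N" "b < N"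
    let ?x = "norm ((A ^\<^sub>m t) $$ (a,b))"
    have "B ^\<^sub>m t = complex_of_real (1/c) ^ t \<cdot>\<^sub>m A ^\<^sub>m t"
      unfolding B_def by (rule smult_pow_mat[OF A])
    then have "norm ((B ^\<^sub>m t) $$ (a,b)) = (1/c) ^ t * ?x"
      using ab A c by (simp add: norm_mult norm_power norm_divide)
    moreover have "norm ((B ^\<^sub>m t) $$ (a,b)) \<le> C" using C[of t] ab B by (auto simp: norm_bound_def)
    ultimately have "c ^ t * ((1/c) ^ t * ?x) \<le> c ^ t * C"
      using c by (intro mult_left_mono) auto
    moreover have "c ^ t * ((1/c) ^ t * ?x) = ?x"
      using c by (simp add: mult.assoc[symmetric] power_mult_distrib[symmetric])
    ultimately show "?x \<le> C * c ^ t" by (simp only: mult.commute)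
  qed
qed

lemma spectral_radius_less_1_pow_mult_vec_bound:
  fixes A :: "real mat"
  assumes A: "A \<in> carrier_mat N N" and sr: "spectral_radius (map_mat complex_of_real A) < 1"
    and v: "v \<in> carrier_vec N"
  obtains c D where "0 < c" "c < 1" "\<And>t a. a < N \<Longrightarrow> \<bar>(A ^\<^sub>m t *\<^sub>v v) $ a\<bar> \<le> D * c ^ t"
proof -
  have Ac: "map_mat complex_of_real A \<in> carrier_mat N N" using A by simp
  obtain c C where c: "0 < c" "c < 1"
    and C: "\<And>t a b. a < N \<Longrightarrow> b < N \<Longrightarrow> norm ((map_mat complex_of_real A ^\<^sub>m t) $$ (a,b)) \<le> C * c ^ t"
    using spectral_radius_less_1_geometric_bound[OF Ac sr] by blast
  have entry: "\<bar>(A ^\<^sub>m t) $$ (a,b)\<bar> \<le> C * c ^ t" if "a < N" "b < N" for t a b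
    using C[OF that, of t] that A by (simp add: of_real_hom.mat_hom_pow[OF A, symmetric])
  define V where "V = (\<Sum>b<N. \<bar>v $ b\<bar>)"
  have "\<bar>(A ^\<^sub>m t *\<^sub>v v) $ a\<bar> \<le> (C * V) * c ^ t" if a: "a < N" for t a
  proof -
    have "\<bar>(A ^\<^sub>m t *\<^sub>v v) $ a\<bar> = \<bar>\<Sum>b<N. (A ^\<^sub>m t) $$ (a,b) * v $ b\<bar>"
      using mult_mat_vec_index_sum[OF pow_carrier_mat[OF A] v a] by simp
    also have "\<dots> \<le> (\<Sum>b<N. \<bar>(A ^\<^sub>m t) $$ (a,b)\<bar> * \<bar>v $ b\<bar>)"
      by (rule order_trans[OF sum_abs]) (simp add: abs_mult)
    also have "\<dots> \<le> (\<Sum>b<N. C * c ^ t * \<bar>v $ b\<bar>)"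
      using entry[OF a] by (intro sum_mono mult_right_mono) auto
    also have "\<dots> = (C * V) * c ^ t" by (simp add: V_def sum_distrib_left ac_simps)
    finally show ?thesis .
  qed
  then show ?thesis by (rule that[OF c])
qed

lemma spectral_radius_less_1_one_minus_invertible:
  fixes A :: "real mat"
  assumes A: "A \<in> carrier_mat N N" and sr: "spectral_radius (map_mat complex_of_real A) < 1"
  shows "det (1\<^sub>m N - A) \<noteq> 0"
proof
  have IA: "1\<^sub>m N - A \<in> carrier_mat N N" using A by (intro minus_carrier_mat) auto
  assume "det (1\<^sub>m N - A) = 0"
  then obtain x where x: "x \<in> carrier_vec N" "x \<noteq> 0\<^sub>v N" and "(1\<^sub>m N - A) *\<^sub>v x = 0\<^sub>v N"
    using det_0_iff_vec_prod_zero[OF IA] by blast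
  then have kernel: "x - A *\<^sub>v x = 0\<^sub>v N" using A by (simp add: minus_mult_distrib_mat_vec[of _ N N])
  have fixed: "A *\<^sub>v x = x"
  proof (rule eq_vecI)
    fix a assume "a < dim_vec x"
    then show "(A *\<^sub>v x) $ a = x $ a" using arg_cong[OF kernel, of "\<lambda>w. w $ a"] A x by simp
  qed (use A x in simp)
  have pow_fixed: "A ^\<^sub>m t *\<^sub>v x = x" for t
  proof (induction t)
    case 0 then show ?case using A x by simp
  next
    case (Suc t) then show ?case by (simp only: pow_mat_Suc_mult_mat_vec[OF A x(1)] fixed)
  qed
  obtain c D where c: "0 < c" "c < 1" and D: "\<And>t a. a < N \<Longrightarrow> \<bar>(A ^\<^sub>m t *\<^sub>v x) $ a\<bar> \<le> D * c ^ t"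
    using spectral_radius_less_1_pow_mult_vec_bound[OF A sr x(1)] by blast
  have "x $ a = 0" if a: "a < N" for a
  proof -
    have "(\<lambda>t. D * c ^ t) \<longlonglongrightarrow> 0"
      using c by (intro tendsto_mult_right_zero LIMSEQ_power_zero) auto
    moreover have "\<bar>x $ a\<bar> \<le> D * c ^ t" for t using D[OF a, of t] by (simp add: pow_fixed)
    ultimately have "\<bar>x $ a\<bar> \<le> 0" by (intro LIMSEQ_le_const) auto
    then show ?thesis by simp
  qed
  then have "x = 0\<^sub>v N" using x(1) by (intro eq_vecI) auto
  with x(2) show False ..
qed

lemma neumann_series_solves:
  fixes A :: "real mat"
  assumes A: "A \<in> carrier_mat N N" and sr: "spectral_radius (map_mat complex_of_real A) < 1"
    and v: "v \<in> carrier_vec N"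
  shows "(1\<^sub>m N - A) *\<^sub>v vec N (\<lambda>a. \<Sum>t. (A ^\<^sub>m t *\<^sub>v v) $ a) = v"
proof -
  obtain c D where c: "0 < c" "c < 1" and D: "\<And>t a. a < N \<Longrightarrow> \<bar>(A ^\<^sub>m t *\<^sub>v v) $ a\<bar> \<le> D * c ^ t"
    using spectral_radius_less_1_pow_mult_vec_bound[OF A sr v] by blast
  have summable: "summable (\<lambda>t. (A ^\<^sub>m t *\<^sub>v v) $ a)" if a: "a < N" for a
  proof (rule summable_comparison_test[of _ "\<lambda>t. D * c ^ t"])
    show "\<exists>N'. \<forall>t\<ge>N'. norm ((A ^\<^sub>m t *\<^sub>v v) $ a) \<le> D * c ^ t" using D[OF a] by auto
    show "summable (\<lambda>t. D * c ^ t)" using c by (intro summable_mult summable_geometric) auto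
  qed
  define s where "s = vec N (\<lambda>a. \<Sum>t. (A ^\<^sub>m t *\<^sub>v v) $ a)"
  have s: "s \<in> carrier_vec N" by (simp add: s_def)
  have As: "(A *\<^sub>v s) $ a = s $ a - v $ a" if a: "a < N" for a
  proof -
    have "(A *\<^sub>v s) $ a = (\<Sum>b<N. A $$ (a,b) * (\<Sum>t. (A ^\<^sub>m t *\<^sub>v v) $ b))"
      using mult_mat_vec_index_sum[OF A s a] by (simp add: s_def)
    also have "\<dots> = (\<Sum>b<N. \<Sum>t. A $$ (a,b) * (A ^\<^sub>m t *\<^sub>v v) $ b)"
      by (intro sum.cong refl suminf_mult[symmetric] summable) simp
    also have "\<dots> = (\<Sum>t. \<Sum>b<N. A $$ (a,b) * (A ^\<^sub>m t *\<^sub>v v) $ b)"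
      by (rule suminf_sum[symmetric]) (simp add: summable_mult summable)
    also have "\<dots> = (\<Sum>t. (A ^\<^sub>m Suc t *\<^sub>v v) $ a)"
      using mult_mat_vec_index_sum[OF A mult_mat_vec_carrier[OF pow_carrier_mat[OF A] v] a]
      by (simp add: pow_mat_Suc_mult_mat_vec[OF A v] del: pow_mat.simps)
    also have "\<dots> = s $ a - v $ a"
      using suminf_split_head[OF summable[OF a]] a A v by (simp add: s_def)
    finally show ?thesis .
  qed
  have "(1\<^sub>m N - A) *\<^sub>v s = v"
  proof (rule eq_vecI)
    fix a assume "a < dim_vec v"
    then have a: "a < N" using v by simp
    have "(1\<^sub>m N - A) *\<^sub>v s = s - A *\<^sub>v s" using A s by (simp add: minus_mult_distrib_mat_vec[of _ N N])
    then show "((1\<^sub>m N - A) *\<^sub>v s) $ a = v $ a" using As[OF a] a s A by simp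
  qed (use A v in simp)
  then show ?thesis by (simp add: s_def)
qed

lemma neumann_series_inverse:
  fixes A :: "real mat"
  assumes A: "A \<in> carrier_mat N N" and sr: "spectral_radius (map_mat complex_of_real A) < 1"
    and v: "v \<in> carrier_vec N"
  obtains B where "mat_inverse (1\<^sub>m N - A) = Some B"
    "B *\<^sub>v v = vec N (\<lambda>a. \<Sum>t. (A ^\<^sub>m t *\<^sub>v v) $ a)"
proof -
  define s where "s = vec N (\<lambda>a. \<Sum>t. (A ^\<^sub>m t *\<^sub>v v) $ a)"
  have s: "s \<in> carrier_vec N" by (simp add: s_def)
  have IA: "1\<^sub>m N - A \<in> carrier_mat N N" using A by (intro minus_carrier_mat) auto
  obtain B where B: "mat_inverse (1\<^sub>m N - A) = Some B"
    using mat_inverse(1)[OF IA] det_non_zero_imp_unit[OF IA spectral_radius_less_1_one_minus_invertible[OF A sr]]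
    by fastforce
  have BI: "B * (1\<^sub>m N - A) = 1\<^sub>m N" and Bc: "B \<in> carrier_mat N N"
    using mat_inverse(2)[OF IA B] by auto
  have "B *\<^sub>v v = B *\<^sub>v ((1\<^sub>m N - A) *\<^sub>v s)"
    unfolding s_def neumann_series_solves[OF A sr v] ..
  also have "\<dots> = (B * (1\<^sub>m N - A)) *\<^sub>v s" by (rule assoc_mult_mat_vec[OF Bc IA s, symmetric])
  also have "\<dots> = s" using BI s by simp
  finally show ?thesis using that B by (simp add: s_def)
qed

subsection \<open>Substochastic matrices killed on a reachable set\<close>

lemma spectral_radius_ge_1_subinvariant:
  fixes A :: "real mat"
  assumes A: "A \<in> carrier_mat N N" and N: "0 < N"
    and nonneg: "\<And>a b. a < N \<Longrightarrow> b < N \<Longrightarrow> 0 \<le> A $$ (a,b)"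
    and sr: "1 \<le> spectral_radius (map_mat complex_of_real A)"
  obtains u where "\<And>b. 0 \<le> u b" "\<exists>b<N. 0 < u b"
    "\<And>a. a < N \<Longrightarrow> u a \<le> (\<Sum>b<N. A $$ (a,b) * u b)"
proof -
  define Ac where "Ac = map_mat complex_of_real A"
  have Ac: "Ac \<in> carrier_mat N N" using A by (simp add: Ac_def)
  have "spectral_radius Ac \<in> norm ` spectrum Ac" by (rule spectral_radius_mem_max(1)[OF Ac N])
  then obtain ev where "eigenvalue Ac ev" and ev: "1 \<le> norm ev"
    using sr by (auto simp: Ac_def spectrum_def)
  then obtain v where v: "v \<in> carrier_vec N" "v \<noteq> 0\<^sub>v N" and Av: "Ac *\<^sub>v v = ev \<cdot>\<^sub>v v"
    using Ac by (auto simp: eigenvalue_def eigenvector_def)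
  define u where "u b = norm (v $ b)" for b
  have "\<exists>b<N. 0 < u b"
  proof (rule ccontr)
    assume "\<not> (\<exists>b<N. 0 < u b)"
    then have "v = 0\<^sub>v N" using v by (intro eq_vecI) (auto simp: u_def)
    with v(2) show False ..
  qed
  moreover have "u a \<le> (\<Sum>b<N. A $$ (a,b) * u b)" if a: "a < N" for a
  proof -
    have "ev * v $ a = (\<Sum>b<N. complex_of_real (A $$ (a,b)) * v $ b)"
      using arg_cong[OF Av, of "\<lambda>w. w $ a"] mult_mat_vec_index_sum[OF Ac v(1) a] a A v
      by (simp add: Ac_def)
    then have "norm ev * u a \<le> (\<Sum>b<N. norm (complex_of_real (A $$ (a,b)) * v $ b))"
      unfolding u_def by (metis norm_mult norm_sum)
    also have "\<dots> = (\<Sum>b<N. A $$ (a,b) * u b)"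
      using a nonneg by (intro sum.cong refl) (simp add: norm_mult u_def)
    finally show ?thesis using ev mult_right_mono[OF ev, of "u a"] by (simp add: u_def)
  qed
  ultimately show ?thesis using that[of u] by (auto simp: u_def)
qed

text \<open>A maximum principle: at a maximum of a subinvariant function the row sums of \<open>K\<close> leave
  no slack, so every \<open>K\<close>-successor is again maximal and was not killed.\<close>

lemma killed_chain_maximum_propagates:
  fixes K A :: "real mat"
  assumes K: "row_stochastic N K"
    and A: "\<And>a b. a < N \<Longrightarrow> b < N \<Longrightarrow> A $$ (a,b) = (if b \<in> D then 0 else K $$ (a,b))"
    and u: "\<And>b. b < N \<Longrightarrow> 0 \<le> u b \<and> u b \<le> M" and M: "0 < M"
    and w: "w < N" "u w = M" and sub: "u w \<le> (\<Sum>b<N. A $$ (w,b) * u b)"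
    and b: "b < N" "0 < K $$ (w,b)"
  shows "b \<notin> D \<and> u b = M"
proof -
  define slack where "slack b' = K $$ (w,b') * M - A $$ (w,b') * u b'" for b'
  have slack_nonneg: "0 \<le> slack b'" if "b' \<in> {..<N}" for b'
  proof -
    have b': "b' < N" using that by simp
    have K_nonneg: "0 \<le> K $$ (w,b')" using K w b' by (simp add: row_stochastic_def)
    have "A $$ (w,b') * u b' \<le> K $$ (w,b') * u b'"
      using A[OF w(1) b'] u[OF b'] K_nonneg by (intro mult_right_mono) auto
    also have "\<dots> \<le> K $$ (w,b') * M" using u[OF b'] K_nonneg by (intro mult_left_mono) auto
    finally show ?thesis by (simp add: slack_def)
  qed
  have "(\<Sum>b'<N. slack b') = M - (\<Sum>b'<N. A $$ (w,b') * u b')"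
    using K w by (simp add: slack_def sum_subtractf sum_distrib_right[symmetric] row_stochastic_def)
  also have "\<dots> \<le> 0" using sub w(2) by simp
  finally have "slack b = 0"
    using sum_nonneg_eq_0_iff[of "{..<N}" slack] slack_nonneg b(1)
      sum_nonneg[of "{..<N}" slack, OF slack_nonneg] by auto
  then show ?thesis
    using b M u[OF b(1)] A[OF w(1) b(1)] by (auto simp: slack_def split: if_splits)
qed

lemma spectral_radius_killed_chain_less_1:
  fixes K A :: "real mat"
  assumes K: "row_stochastic N K" and A_carrier: "A \<in> carrier_mat N N"
    and A: "\<And>a b. a < N \<Longrightarrow> b < N \<Longrightarrow> A $$ (a,b) = (if b \<in> D then 0 else K $$ (a,b))"
    and reach: "\<And>a. a < N \<Longrightarrow> \<exists>zs. is_walk N K zs \<and> 2 \<le> length zs \<and> hd zs = a \<and> last zs \<in> D"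
    and N: "0 < N"
  shows "spectral_radius (map_mat complex_of_real A) < 1"
proof (rule ccontr)
  assume "\<not> ?thesis"
  then have sr: "1 \<le> spectral_radius (map_mat complex_of_real A)" by simp
  have A_nonneg: "0 \<le> A $$ (a,b)" if "a < N" "b < N" for a b
    using A[OF that] K that by (simp add: row_stochastic_def)
  obtain u where u_nonneg: "\<And>b. 0 \<le> u b" and u_pos: "\<exists>b<N. 0 < u b"
    and sub: "\<And>a. a < N \<Longrightarrow> u a \<le> (\<Sum>b<N. A $$ (a,b) * u b)"
    using spectral_radius_ge_1_subinvariant[OF A_carrier N A_nonneg sr] by blast
  define M where "M = Max (u ` {..<N})"
  have u: "0 \<le> u b \<and> u b \<le> M" if "b < N" for b
    using that u_nonneg by (auto simp: M_def)
  obtain b where "b < N" "0 < u b" using u_pos by blast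
  then have M: "0 < M" using u[of b] by linarith
  have "M \<in> u ` {..<N}" unfolding M_def using N by (intro Max_in) auto
  then obtain a where a: "a < N" "u a = M" by auto
  obtain zs where zs: "is_walk N K zs" "2 \<le> length zs" "hd zs = a" "last zs \<in> D"
    using reach[OF a(1)] by blast
  have along: "u (zs!s) = M \<and> (0 < s \<longrightarrow> zs!s \<notin> D)" if "s < length zs" for s
    using that
  proof (induction s)
    case 0 then show ?case using zs a by (simp add: hd_conv_nth[symmetric] is_walk_def)
  next
    case (Suc s)
    have nodes: "zs!s < N" "zs!Suc s < N" using Suc.prems zs(1) by (auto simp: is_walk_def subset_eq)
    have "0 < K $$ (zs!s, zs!Suc s)" using Suc.prems zs(1) by (auto simp: is_walk_def)
    moreover have "u (zs!s) = M" using Suc by simp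
    ultimately show ?case
      using killed_chain_maximum_propagates[OF K A u M nodes(1) _ sub[OF nodes(1)] nodes(2)] by simp
  qed
  have "zs \<noteq> []" using zs(2) by auto
  then have "last zs = zs ! (length zs - 1)" by (rule last_conv_nth)
  then show False using along[of "length zs - 1"] zs(2,4) by simp
qed

lemma finite_trajs: "finite (trajs n t i)"
proof -
  have "trajs n t i \<subseteq> {xs. set xs \<subseteq> {..<n} \<and> length xs = Suc t}" by (auto simp: trajs_def)
  then show ?thesis using finite_lists_length_eq[of "{..<n}" "Suc t"] finite_subset by blast
qed

lemma trajs_0: "k < n \<Longrightarrow> trajs n 0 k = {[k]}"
  by (auto simp: trajs_def length_Suc_conv)

lemma trajs_Suc: "i < n \<Longrightarrow> trajs n (Suc t) i = Cons i ` (\<Union>k<n. trajs n t k)"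
proof (intro equalityI subsetI)
  fix xs assume i: "i < n" and xs: "xs \<in> trajs n (Suc t) i"
  then obtain y ws where xs_eq: "xs = y # ws" and "length ws = Suc t"
    by (auto simp: trajs_def length_Suc_conv)
  with xs have "y = i" "ws \<in> trajs n t (ws!0)" "ws!0 < n"
    by (auto simp: trajs_def subset_eq)
  then show "xs \<in> Cons i ` (\<Union>k<n. trajs n t k)" using xs_eq by blast
next
  fix xs assume i: "i < n" and "xs \<in> Cons i ` (\<Union>k<n. trajs n t k)"
  then obtain k ws where "k < n" "ws \<in> trajs n t k" "xs = i # ws" by blast
  then show "xs \<in> trajs n (Suc t) i" using i by (auto simp: trajs_def)
qed

lemma sum_trajs_Suc:
  "i < n \<Longrightarrow> sum g (trajs n (Suc t) i) = (\<Sum>k<n. \<Sum>ws\<in>trajs n t k. g (i # ws))"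
proof -
  assume i: "i < n"
  have "sum g (trajs n (Suc t) i) = sum (g \<circ> Cons i) (\<Union>k<n. trajs n t k)"
    unfolding trajs_Suc[OF i] by (rule sum.reindex) (simp add: inj_on_def)
  also have "\<dots> = (\<Sum>k<n. sum (g \<circ> Cons i) (trajs n t k))"
    by (rule sum.UNION_disjoint) (auto simp: finite_trajs, auto simp: trajs_def)
  finally show ?thesis by simp
qed

lemma path_prob_Cons: "xs \<noteq> [] \<Longrightarrow> path_prob P (i # xs) = P $$ (i, xs!0) * path_prob P xs"
proof -
  assume "xs \<noteq> []"
  then obtain m where m: "length xs = Suc m" by (cases xs) auto
  have "path_prob P (i # xs) = (\<Prod>k<Suc m. P $$ ((i#xs) ! k, (i#xs) ! Suc k))"
    by (simp add: path_prob_def m)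
  also have "\<dots> = P $$ (i, xs!0) * (\<Prod>k<m. P $$ ((i#xs) ! Suc k, (i#xs) ! Suc (Suc k)))"
    by (subst prod.lessThan_Suc_shift) simp
  also have "\<dots> = P $$ (i, xs!0) * path_prob P xs" by (simp add: path_prob_def m)
  finally show ?thesis .
qed

lemma path_prob_nonneg:
  "(\<And>a b. a < n \<Longrightarrow> b < n \<Longrightarrow> 0 \<le> P $$ (a,b)) \<Longrightarrow> set xs \<subseteq> {..<n} \<Longrightarrow> 0 \<le> path_prob P xs"
  unfolding path_prob_def by (intro prod_nonneg) (auto simp: subset_eq)

lemma is_walk_of_path_prob_nonzero:
  assumes nonneg: "\<And>a b. a < n \<Longrightarrow> b < n \<Longrightarrow> 0 \<le> P $$ (a,b)"
    and xs: "xs \<noteq> []" "set xs \<subseteq> {..<n}" "path_prob P xs \<noteq> 0"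
  shows "is_walk n P xs"
  unfolding is_walk_def
proof (intro conjI allI impI xs(1,2))
  fix k assume k: "Suc k < length xs"
  then have "P $$ (xs!k, xs!Suc k) \<noteq> 0" using xs(3) by (auto simp: path_prob_def)
  moreover have "0 \<le> P $$ (xs!k, xs!Suc k)" using k xs(2) by (intro nonneg) (auto simp: subset_eq)
  ultimately show "0 < P $$ (xs!k, xs!Suc k)" by simp
qed

subsection \<open>Expectation as a sum of tail probabilities\<close>

lemma sum_index_times_difference:
  "(\<Sum>t<T. real (Suc t) * (q t - q (Suc t))) = (\<Sum>t<T. q t) - real T * (q T :: real)"
  by (induction T) (simp_all add: algebra_simps)

lemma expectation_eq_sum_tail_probabilities:
  fixes F q :: "nat \<Rightarrow> real"
  assumes F0: "F 0 = 0" and F_Suc: "\<And>t. F (Suc t) = q t - q (Suc t)"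
    and F_nonneg: "\<And>t. 0 \<le> F t" and q0: "q 0 = 1" and q_nonneg: "\<And>t. 0 \<le> q t"
    and q_bound: "\<And>t. q t \<le> D * c ^ t" and c: "0 \<le> c" "c < 1"
  shows "(\<Sum>t. ennreal (F t)) = 1" and "(\<Sum>t. of_nat t * ennreal (F t)) = ennreal (\<Sum>t. q t)"
proof -
  have geometric: "(\<lambda>t. D * c ^ t) \<longlonglongrightarrow> 0"
    using c by (intro tendsto_mult_right_zero LIMSEQ_power_zero) auto
  have q_lim: "q \<longlonglongrightarrow> 0"
    by (rule tendsto_sandwich[of "\<lambda>_. 0" _ _ "\<lambda>t. D * c ^ t"])
      (simp_all add: q_nonneg q_bound geometric)
  have q_summable: "summable q"
  proof (rule summable_comparison_test[of _ "\<lambda>t. D * c ^ t"])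
    show "\<exists>N. \<forall>t\<ge>N. norm (q t) \<le> D * c ^ t" using q_nonneg q_bound by auto
    show "summable (\<lambda>t. D * c ^ t)" using c by (intro summable_mult summable_geometric) auto
  qed
  have "(\<lambda>t. q t - q (Suc t)) sums (q 0 - 0)" by (rule telescope_sums'[OF q_lim])
  then have "(\<lambda>t. F (Suc t)) sums 1" using q0 F_Suc by simp
  then have "F sums 1" using F0 sums_Suc_iff[of F 1] by simp
  then show "(\<Sum>t. ennreal (F t)) = 1" using suminf_ennreal_eq[OF F_nonneg] by simp
  have partial: "(\<Sum>t<Suc T. real t * F t) = (\<Sum>t<T. q t) - real T * q T" for T
    using sum_index_times_difference[where T=T and q=q] by (simp add: sum.lessThan_Suc_shift F_Suc del: sum.lessThan_Suc)
  have "(\<lambda>T. real T * q T) \<longlonglongrightarrow> 0"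
  proof (rule tendsto_sandwich[of "\<lambda>_. 0" _ _ "\<lambda>T. D * (real T * c ^ T)"])
    show "\<forall>\<^sub>F T in sequentially. 0 \<le> real T * q T" using q_nonneg by simp
    show "\<forall>\<^sub>F T in sequentially. real T * q T \<le> D * (real T * c ^ T)"
    proof (intro always_eventually allI)
      fix T
      have "real T * q T \<le> real T * (D * c ^ T)" using q_bound by (intro mult_left_mono) auto
      then show "real T * q T \<le> D * (real T * c ^ T)" by (simp add: ac_simps)
    qed
    show "(\<lambda>T. D * (real T * c ^ T)) \<longlonglongrightarrow> 0"
      using c by (intro tendsto_mult_right_zero powser_times_n_limit_0) auto
  qed simp
  then have "(\<lambda>T. (\<Sum>t<T. q t) - real T * q T) \<longlonglongrightarrow> (\<Sum>t. q t) - 0"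
    by (intro tendsto_diff summable_LIMSEQ[OF q_summable])
  then have "(\<lambda>T. \<Sum>t<Suc T. real t * F t) \<longlonglongrightarrow> (\<Sum>t. q t)" by (simp only: partial diff_zero)
  then have "(\<lambda>t. real t * F t) sums (\<Sum>t. q t)"
    unfolding sums_def by (rule LIMSEQ_imp_Suc)
  then have "(\<Sum>t. ennreal (real t * F t)) = ennreal (\<Sum>t. q t)"
    using F_nonneg by (intro suminf_ennreal_eq) auto
  then show "(\<Sum>t. of_nat t * ennreal (F t)) = ennreal (\<Sum>t. q t)"
    using F_nonneg by (simp add: ennreal_mult ennreal_of_nat_eq_real_of_nat)
qed

subsection \<open>First meeting probabilities\<close>

definition meets_first :: "nat \<Rightarrow> nat list \<Rightarrow> nat list \<Rightarrow> bool" where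
  "meets_first t xs ys \<longleftrightarrow> (\<forall>s. 1 \<le> s \<and> s < t \<longrightarrow> xs!s \<noteq> ys!s) \<and> xs!t = ys!t"

lemma meet_prob_Suc:
  "meet_prob n P Q i j (Suc t) = (\<Sum>xs\<in>trajs n (Suc t) i. \<Sum>ys\<in>trajs n (Suc t) j.
     if meets_first (Suc t) xs ys then path_prob P xs * path_prob Q ys else 0)"
  by (simp add: meet_prob_def meets_first_def)

lemma meets_first_Cons_Cons:
  "meets_first (Suc (Suc t)) (i#xs) (j#ys) \<longleftrightarrow> xs!0 \<noteq> ys!0 \<and> meets_first (Suc t) xs ys"
proof -
  have "(\<forall>s. 1 \<le> s \<and> s < Suc (Suc t) \<longrightarrow> (i#xs)!s \<noteq> (j#ys)!s) \<longleftrightarrow>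
      xs!0 \<noteq> ys!0 \<and> (\<forall>s. 1 \<le> s \<and> s < Suc t \<longrightarrow> xs!s \<noteq> ys!s)"
  proof
    assume H: "\<forall>s. 1 \<le> s \<and> s < Suc (Suc t) \<longrightarrow> (i#xs)!s \<noteq> (j#ys)!s"
    have "xs!s \<noteq> ys!s" if "s < Suc t" for s using H[rule_format, of "Suc s"] that by simp
    then show "xs!0 \<noteq> ys!0 \<and> (\<forall>s. 1 \<le> s \<and> s < Suc t \<longrightarrow> xs!s \<noteq> ys!s)" by simp
  next
    assume H: "xs!0 \<noteq> ys!0 \<and> (\<forall>s. 1 \<le> s \<and> s < Suc t \<longrightarrow> xs!s \<noteq> ys!s)"
    show "\<forall>s. 1 \<le> s \<and> s < Suc (Suc t) \<longrightarrow> (i#xs)!s \<noteq> (j#ys)!s"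
    proof (intro allI impI)
      fix s assume s: "1 \<le> s \<and> s < Suc (Suc t)"
      then obtain s' where s': "s = Suc s'" by (cases s) auto
      show "(i#xs)!s \<noteq> (j#ys)!s" using H s s' by (cases s') auto
    qed
  qed
  then show ?thesis unfolding meets_first_def by simp
qed

lemma meet_prob_Suc_expand:
  assumes i: "i < n" and j: "j < n"
  shows "meet_prob n P Q i j (Suc t) = (\<Sum>k<n. \<Sum>l<n. \<Sum>xs\<in>trajs n t k. \<Sum>ys\<in>trajs n t l.
     if meets_first (Suc t) (i#xs) (j#ys) then path_prob P (i#xs) * path_prob Q (j#ys) else 0)"
  unfolding meet_prob_Suc sum_trajs_Suc[OF i] sum_trajs_Suc[OF j]
  by (intro sum.cong refl) (rule sum.swap)

lemma meet_prob_one: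
  assumes i: "i < n" and j: "j < n"
  shows "meet_prob n P Q i j (Suc 0) = (\<Sum>k<n. P $$ (i,k) * Q $$ (j,k))"
proof -
  have "meet_prob n P Q i j (Suc 0) = (\<Sum>k<n. \<Sum>l<n. if k = l then P $$ (i,k) * Q $$ (j,l) else 0)"
    unfolding meet_prob_Suc_expand[OF i j]
    by (intro sum.cong refl) (simp add: trajs_0 meets_first_def path_prob_def)
  then show ?thesis by (simp add: sum.delta)
qed

lemma meet_prob_Suc_Suc:
  assumes i: "i < n" and j: "j < n"
  shows "meet_prob n P Q i j (Suc (Suc t)) =
    (\<Sum>k<n. \<Sum>l<n. (if k = l then 0 else P $$ (i,k) * Q $$ (j,l)) * meet_prob n P Q k l (Suc t))"
  unfolding meet_prob_Suc_expand[OF i j]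
proof (intro sum.cong refl)
  fix k l
  let ?w = "if k = l then 0 else P $$ (i,k) * Q $$ (j,l)"
  have "(if meets_first (Suc (Suc t)) (i#xs) (j#ys) then path_prob P (i#xs) * path_prob Q (j#ys) else 0)
      = ?w * (if meets_first (Suc t) xs ys then path_prob P xs * path_prob Q ys else 0)"
    if "xs \<in> trajs n (Suc t) k" "ys \<in> trajs n (Suc t) l" for xs ys
  proof -
    have "xs \<noteq> []" "ys \<noteq> []" "xs!0 = k" "ys!0 = l" using that by (auto simp: trajs_def)
    then show ?thesis by (auto simp: meets_first_Cons_Cons path_prob_Cons)
  qed
  then show "(\<Sum>xs\<in>trajs n (Suc t) k. \<Sum>ys\<in>trajs n (Suc t) l.
      if meets_first (Suc (Suc t)) (i#xs) (j#ys) then path_prob P (i#xs) * path_prob Q (j#ys) else 0)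
    = ?w * meet_prob n P Q k l (Suc t)"
    by (simp add: meet_prob_Suc sum_distrib_left)
qed

lemma meet_prob_nonneg:
  assumes "\<And>a b. a < n \<Longrightarrow> b < n \<Longrightarrow> 0 \<le> P $$ (a,b)" "\<And>a b. a < n \<Longrightarrow> b < n \<Longrightarrow> 0 \<le> Q $$ (a,b)"
  shows "0 \<le> meet_prob n P Q i j t"
proof -
  have "0 \<le> path_prob P xs * path_prob Q ys" if "xs \<in> trajs n t i" "ys \<in> trajs n t j" for xs ys
    using that by (intro mult_nonneg_nonneg path_prob_nonneg assms) (auto simp: trajs_def)
  then show ?thesis unfolding meet_prob_def by (auto intro!: sum_nonneg)
qed

lemma walks_of_meet_prob_nonzero:
  assumes P: "\<And>a b. a < n \<Longrightarrow> b < n \<Longrightarrow> 0 \<le> P $$ (a,b)"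
    and Q: "\<And>a b. a < n \<Longrightarrow> b < n \<Longrightarrow> 0 \<le> Q $$ (a,b)"
    and t: "meet_prob n P Q i j t \<noteq> 0"
  shows "\<exists>k<n. \<exists>xs ys. is_walk n P xs \<and> is_walk n Q ys \<and> length xs = length ys \<and> 2 \<le> length xs \<and>
    hd xs = i \<and> last xs = k \<and> hd ys = j \<and> last ys = k"
proof -
  obtain t' where t': "t = Suc t'" using t by (cases t) (auto simp: meet_prob_def)
  obtain xs ys where xs: "xs \<in> trajs n t i" and ys: "ys \<in> trajs n t j"
    and meet: "meets_first t xs ys" and nz: "path_prob P xs \<noteq> 0" "path_prob Q ys \<noteq> 0"
    using t unfolding t' meet_prob_Suc
    by (auto elim!: sum.not_neutral_contains_not_neutral split: if_splits)
  have len: "length xs = Suc t" "length ys = Suc t" and nodes: "set xs \<subseteq> {..<n}" "set ys \<subseteq> {..<n}"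
    and starts: "xs!0 = i" "ys!0 = j"
    using xs ys by (auto simp: trajs_def)
  then have ne: "xs \<noteq> []" "ys \<noteq> []" by auto
  have "is_walk n P xs" "is_walk n Q ys"
    using is_walk_of_path_prob_nonzero[OF P ne(1) nodes(1) nz(1)]
      is_walk_of_path_prob_nonzero[OF Q ne(2) nodes(2) nz(2)] by auto
  moreover have "xs!t < n" using nodes(1) len by (auto simp: subset_eq)
  moreover have "hd xs = i" "hd ys = j" "last xs = xs!t" "last ys = ys!t"
    using ne len starts by (simp_all add: hd_conv_nth last_conv_nth)
  ultimately show ?thesis using len meet t' by (auto simp: meets_first_def)
qed

subsection \<open>The pursuit-evasion chain\<close>

locale pursuit_evasion =
  fixes n :: nat and Pp Pe :: "real mat"
  assumes n: "0 < n" and Pp: "row_stochastic n Pp" and Pe: "row_stochastic n Pe"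
begin

abbreviation K :: "real mat" where "K \<equiv> kron Pe Pp"

abbreviation A :: "real mat" where "A \<equiv> K * E_mat n"

text \<open>Entry \<open>j*n+i\<close> of \<open>survival t\<close> is the probability that chains started at \<open>i\<close> and \<open>j\<close> have
  not met at any of the times \<open>1..t\<close>.\<close>

definition survival :: "nat \<Rightarrow> real vec" where
  "survival t = A ^\<^sub>m t *\<^sub>v vec (n*n) (\<lambda>_. 1)"

lemma Pp_carrier: "Pp \<in> carrier_mat n n" and Pe_carrier: "Pe \<in> carrier_mat n n"
  using Pp Pe by (auto simp: row_stochastic_def)

lemma Pp_nonneg: "i < n \<Longrightarrow> k < n \<Longrightarrow> 0 \<le> Pp $$ (i,k)"
  and Pe_nonneg: "i < n \<Longrightarrow> k < n \<Longrightarrow> 0 \<le> Pe $$ (i,k)"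
  using Pp Pe by (auto simp: row_stochastic_def)

lemma K_row_stochastic: "row_stochastic (n*n) K"
  by (rule row_stochastic_kron[OF Pe Pp])

lemma K_carrier: "K \<in> carrier_mat (n*n) (n*n)"
  by (rule kron_carrier_mat[OF Pe_carrier Pp_carrier])

lemma A_carrier: "A \<in> carrier_mat (n*n) (n*n)"
  using K_carrier E_mat_carrier by (rule mult_carrier_mat)

lemma index_A: "a < n*n \<Longrightarrow> b < n*n \<Longrightarrow> A $$ (a,b) = (if b mod n = b div n then 0 else K $$ (a,b))"
  by (rule index_mult_E_mat[OF K_carrier])

lemma A_mult_vec_pair:
  assumes x: "x \<in> carrier_vec (n*n)" and i: "i < n" and j: "j < n"
  shows "(A *\<^sub>v x) $ (j*n+i) =
    (\<Sum>k<n. \<Sum>l<n. (if k = l then 0 else Pp $$ (i,k) * Pe $$ (j,l)) * x $ (l*n+k))"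
proof -
  have a: "j*n+i < n*n" using i j by (rule pair_index_less)
  have "(A *\<^sub>v x) $ (j*n+i) = (\<Sum>l<n. \<Sum>k<n. A $$ (j*n+i, l*n+k) * x $ (l*n+k))"
    using mult_mat_vec_index_sum[OF A_carrier x a] by (simp add: sum_lessThan_mult_nat)
  also have "\<dots> = (\<Sum>l<n. \<Sum>k<n. (if k = l then 0 else Pp $$ (i,k) * Pe $$ (j,l)) * x $ (l*n+k))"
    using i j a by (intro sum.cong refl)
      (auto simp: index_A index_kron[OF Pe_carrier Pp_carrier] pair_index_less)
  also have "\<dots> = (\<Sum>k<n. \<Sum>l<n. (if k = l then 0 else Pp $$ (i,k) * Pe $$ (j,l)) * x $ (l*n+k))"
    by (rule sum.swap)
  finally show ?thesis .
qed

lemma survival_carrier: "survival t \<in> carrier_vec (n*n)"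
  unfolding survival_def by (rule mult_mat_vec_carrier[OF pow_carrier_mat[OF A_carrier]]) simp

lemma survival_0: "a < n*n \<Longrightarrow> survival 0 $ a = 1"
  using K_carrier by (simp add: survival_def)

lemma survival_Suc: "survival (Suc t) = A *\<^sub>v survival t"
  unfolding survival_def by (rule pow_mat_Suc_mult_mat_vec[OF A_carrier]) simp

lemma survival_nonneg: "a < n*n \<Longrightarrow> 0 \<le> survival t $ a"
proof (induction t arbitrary: a)
  case 0 then show ?case by (simp add: survival_0)
next
  case (Suc t)
  have "0 \<le> A $$ (a,b)" if "b < n*n" for b
    using K_row_stochastic Suc.prems that by (simp add: index_A row_stochastic_def)
  then show ?case
    unfolding survival_Suc mult_mat_vec_index_sum[OF A_carrier survival_carrier Suc.prems]
    by (auto intro!: sum_nonneg mult_nonneg_nonneg Suc.IH)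
qed

lemma meet_prob_eq_survival_diff:
  assumes i: "i < n" and j: "j < n"
  shows "meet_prob n Pp Pe i j (Suc t) = survival t $ (j*n+i) - survival (Suc t) $ (j*n+i)"
  using i j
proof (induction t arbitrary: i j)
  case 0
  let ?w = "\<lambda>k l. Pp $$ (i,k) * Pe $$ (j,l)"
  have "1 = (\<Sum>k<n. Pp $$ (i,k)) * (\<Sum>l<n. Pe $$ (j,l))"
    using 0 Pp Pe by (simp add: row_stochastic_def)
  also have "\<dots> = (\<Sum>k<n. \<Sum>l<n. if k = l then 0 else ?w k l) + (\<Sum>k<n. ?w k k)"
    by (simp add: sum_product sum_square_split_diagonal[of ?w])
  also have "(\<Sum>k<n. \<Sum>l<n. if k = l then 0 else ?w k l) = survival (Suc 0) $ (j*n+i)"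
    using 0 pair_index_less[of _ n _ n]
    by (simp add: survival_Suc A_mult_vec_pair[OF survival_carrier] survival_0)
  finally show ?case
    using 0 pair_index_less[OF 0] by (simp add: meet_prob_one survival_0)
next
  case (Suc t)
  let ?w = "\<lambda>k l. if k = l then 0 else Pp $$ (i,k) * Pe $$ (j,l)"
  have "meet_prob n Pp Pe i j (Suc (Suc t)) =
      (\<Sum>k<n. \<Sum>l<n. ?w k l * (survival t $ (l*n+k) - survival (Suc t) $ (l*n+k)))"
    using Suc by (simp add: meet_prob_Suc_Suc)
  also have "\<dots> = (\<Sum>k<n. \<Sum>l<n. ?w k l * survival t $ (l*n+k))
      - (\<Sum>k<n. \<Sum>l<n. ?w k l * survival (Suc t) $ (l*n+k))"
    by (simp add: sum_subtractf right_diff_distrib)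
  also have "\<dots> = (A *\<^sub>v survival t) $ (j*n+i) - (A *\<^sub>v survival (Suc t)) $ (j*n+i)"
    by (simp only: A_mult_vec_pair[OF survival_carrier Suc.prems])
  also have "\<dots> = survival (Suc t) $ (j*n+i) - survival (Suc (Suc t)) $ (j*n+i)"
    by (simp only: survival_Suc)
  finally show ?case .
qed

lemma meeting_time_eq_survival_sum:
  assumes sr: "spectral_radius (map_mat complex_of_real A) < 1" and i: "i < n" and j: "j < n"
  shows "meeting_time n Pp Pe i j = ennreal (\<Sum>t. survival t $ (j*n+i))"
proof -
  have a: "j*n+i < n*n" using i j by (rule pair_index_less)
  obtain c D where c: "0 < c" "c < 1" and D: "\<And>t a. a < n*n \<Longrightarrow> \<bar>survival t $ a\<bar> \<le> D * c ^ t"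
    using spectral_radius_less_1_pow_mult_vec_bound[OF A_carrier sr vec_carrier]
    unfolding survival_def by blast
  have F0: "meet_prob n Pp Pe i j 0 = 0" by (simp add: meet_prob_def)
  have F_nonneg: "0 \<le> meet_prob n Pp Pe i j t" for t
    by (rule meet_prob_nonneg[OF Pp_nonneg Pe_nonneg])
  have bound: "survival t $ (j*n+i) \<le> D * c ^ t" for t using abs_le_D1[OF D[OF a]] .
  note tail = expectation_eq_sum_tail_probabilities[OF F0 meet_prob_eq_survival_diff[OF i j] F_nonneg
      survival_0[OF a] survival_nonneg[OF a] bound less_imp_le[OF c(1)] c(2)]
  show ?thesis by (simp add: meeting_time_def tail)
qed

lemma meeting_times_eq_neumann_series:
  assumes sr: "spectral_radius (map_mat complex_of_real A) < 1"
  shows "\<exists>B. mat_inverse (1\<^sub>m (n*n) - A) = Some B \<and>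
    (\<forall>i<n. \<forall>j<n. meeting_time n Pp Pe i j = ennreal ((B *\<^sub>v vec (n*n) (\<lambda>_. 1)) $ (j*n+i)))"
proof -
  obtain B where B: "mat_inverse (1\<^sub>m (n*n) - A) = Some B"
    and B_ones: "B *\<^sub>v vec (n*n) (\<lambda>_. 1) = vec (n*n) (\<lambda>a. \<Sum>t. survival t $ a)"
    using neumann_series_inverse[OF A_carrier sr vec_carrier]
    unfolding survival_def by blast
  have "meeting_time n Pp Pe i j = ennreal ((B *\<^sub>v vec (n*n) (\<lambda>_. 1)) $ (j*n+i))"
    if "i < n" "j < n" for i j
    using pair_index_less[OF that] by (simp add: B_ones meeting_time_eq_survival_sum[OF sr that])
  with B show ?thesis by blast
qed

lemma finite_meeting_time_imp_walks:
  assumes i: "i < n" and j: "j < n" and finite: "meeting_time n Pp Pe i j < \<infinity>"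
  shows "\<exists>k<n. \<exists>xs ys. is_walk n Pp xs \<and> is_walk n Pe ys \<and> length xs = length ys \<and>
    2 \<le> length xs \<and> hd xs = i \<and> last xs = k \<and> hd ys = j \<and> last ys = k"
proof -
  have "\<exists>t. meet_prob n Pp Pe i j t \<noteq> 0"
  proof (rule ccontr)
    assume "\<not> ?thesis"
    then have "meeting_time n Pp Pe i j = \<infinity>" by (simp add: meeting_time_def)
    with finite show False by simp
  qed
  then obtain t where "meet_prob n Pp Pe i j t \<noteq> 0" by blast
  then show ?thesis using walks_of_meet_prob_nonzero[of n Pp Pe] Pp_nonneg Pe_nonneg by blast
qed

lemma kron_walks_if_meeting_walks:
  assumes walks: "\<forall>i<n. \<forall>j<n. \<exists>k<n. \<exists>xs ys. is_walk n Pp xs \<and> is_walk n Pe ys \<and>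
    length xs = length ys \<and> 2 \<le> length xs \<and> hd xs = i \<and> last xs = k \<and> hd ys = j \<and> last ys = k"
  shows "\<forall>i<n. \<forall>j<n. \<exists>k<n. \<exists>zs. is_walk (n*n) K zs \<and> 2 \<le> length zs \<and>
    hd zs = j*n+i \<and> last zs = k*n+k"
proof (intro allI impI)
  fix i j assume "i < n" "j < n"
  with walks obtain k xs ys where "k < n" and xs: "is_walk n Pp xs" and ys: "is_walk n Pe ys"
    and walk_props: "length xs = length ys" "2 \<le> length xs" "hd xs = i" "last xs = k" "hd ys = j" "last ys = k"
    by blast
  obtain zs where "is_walk (n*n) K zs" "length zs = length xs"
    "hd zs = hd ys * n + hd xs" "last zs = last ys * n + last xs"
    using kron_walk_of_walks[OF Pe_carrier Pp_carrier ys xs walk_props(1)[symmetric]] by blast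
  with \<open>k < n\<close> walk_props
  show "\<exists>k<n. \<exists>zs. is_walk (n*n) K zs \<and> 2 \<le> length zs \<and> hd zs = j*n+i \<and> last zs = k*n+k"
    by (intro exI[of _ k] conjI exI[of _ zs]) simp_all
qed

lemma spectral_radius_less_1_if_diagonal_reachable:
  assumes reach: "\<forall>i<n. \<forall>j<n. \<exists>k<n. \<exists>zs. is_walk (n*n) K zs \<and> 2 \<le> length zs \<and>
    hd zs = j*n+i \<and> last zs = k*n+k"
  shows "spectral_radius (map_mat complex_of_real A) < 1"
proof (rule spectral_radius_killed_chain_less_1[OF K_row_stochastic A_carrier])
  show "A $$ (a,b) = (if b \<in> {b. b mod n = b div n} then 0 else K $$ (a,b))"
    if "a < n*n" "b < n*n" for a b
    using index_A[OF that] by simp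
  show "0 < n*n" using n by simp
  fix a assume a: "a < n*n"
  obtain k zs where "k < n" "is_walk (n*n) K zs" "2 \<le> length zs"
      "hd zs = (a div n)*n + a mod n" "last zs = k*n+k"
    using reach pair_index_div_less[OF a] pair_index_mod_less[OF a] by blast
  then show "\<exists>zs. is_walk (n*n) K zs \<and> 2 \<le> length zs \<and> hd zs = a \<and>
      last zs \<in> {b. b mod n = b div n}"
    by auto
qed

end

lemma implication_cycle:
  "(a \<Longrightarrow> b) \<Longrightarrow> (b \<Longrightarrow> c) \<Longrightarrow> (c \<Longrightarrow> d) \<Longrightarrow> (d \<Longrightarrow> e) \<Longrightarrow> (e \<Longrightarrow> a) \<Longrightarrow>
   (a \<longleftrightarrow> b) \<and> (a \<longleftrightarrow> c) \<and> (a \<longleftrightarrow> d) \<and> (a \<longrightarrow> e)"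
  by blast

theorem theorem1:
  fixes n :: nat and Pp Pe :: "real mat"
  assumes n: "n > 0"
    and Pp: "row_stochastic n Pp" and Pe: "row_stochastic n Pe"
  defines "A \<equiv> kron Pe Pp * E_mat n"
  shows
   "((\<forall>i<n. \<forall>j<n. meeting_time n Pp Pe i j < \<infinity>) \<longleftrightarrow>
     (\<forall>i<n. \<forall>j<n. \<exists>k<n. \<exists>xs ys. is_walk n Pp xs \<and> is_walk n Pe ys \<and>
         length xs = length ys \<and> length xs \<ge> 2 \<and>
         hd xs = i \<and> last xs = k \<and> hd ys = j \<and> last ys = k)) \<and>
    ((\<forall>i<n. \<forall>j<n. meeting_time n Pp Pe i j < \<infinity>) \<longleftrightarrow>
     (\<forall>i<n. \<forall>j<n. \<exists>k<n. \<exists>zs. is_walk (n*n) (kron Pe Pp) zs \<and> length zs \<ge> 2 \<and>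
         hd zs = j*n+i \<and> last zs = k*n+k)) \<and>
    ((\<forall>i<n. \<forall>j<n. meeting_time n Pp Pe i j < \<infinity>) \<longleftrightarrow>
     spectral_radius (map_mat complex_of_real A) < 1) \<and>
    ((\<forall>i<n. \<forall>j<n. meeting_time n Pp Pe i j < \<infinity>) \<longrightarrow>
     (\<exists>B. mat_inverse (1\<^sub>m (n*n) - A) = Some B \<and>
        (\<forall>i<n. \<forall>j<n. meeting_time n Pp Pe i j =
            ennreal ((B *\<^sub>v Matrix.vec (n*n) (\<lambda>_. 1)) $ (j*n+i)))))"
proof -
  interpret pursuit_evasion n Pp Pe by unfold_locales (fact n Pp Pe)+
  let "(?finite \<longleftrightarrow> ?walks) \<and> (_ \<longleftrightarrow> ?kron_walks) \<and> (_ \<longleftrightarrow> ?radius) \<and> (_ \<longrightarrow> ?formula)" = ?thesis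
  have "?finite \<Longrightarrow> ?walks" using finite_meeting_time_imp_walks by blast
  moreover have "?walks \<Longrightarrow> ?kron_walks" by (rule kron_walks_if_meeting_walks)
  moreover have "?kron_walks \<Longrightarrow> ?radius"
    unfolding A_def by (rule spectral_radius_less_1_if_diagonal_reachable)
  moreover have "?radius \<Longrightarrow> ?formula"
    unfolding A_def by (rule meeting_times_eq_neumann_series)
  moreover have "?formula \<Longrightarrow> ?finite" by auto
  ultimately show ?thesis by (rule implication_cycle)
qed

end
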